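(* Consider the triangle graph with vertices $s,o,v$ and edges $\{s,o\},\{s,v\},\{v,o\}$, whose edge delays $\tau_{\{s,o\}},\tau_{\{s,v\}},\tau_{\{v,o\}}$ are independent exponential random variables with rates $\lambda_1,\lambda_2,\lambda_3>0$ respectively, and an SI infection started at $s$ at time $0$, so that $\tau_o=\min\{\tau_{\{s,o\}},\tau_{\{s,v\}}+\tau_{\{v,o\}}\}$ and $\tau_v=\min\{\tau_{\{s,v\}},\tau_{\{s,o\}}+\tau_{\{o,v\}}\}$. Let $\mathbb{T}$ be the random infection spanning tree defined in the context. Then $$\mathbb{P}(\mathbb{T}=T_1)=\frac{\lambda_1\lambda_3}{(\lambda_1+\lambda_2)(\lambda_2+\lambda_3)},\quad \mathbb{P}(\mathbb{T}=T_2)=\frac{\lambda_2\lambda_3}{(\lambda_1+\lambda_2)(\lambda_1+\lambda_3)},$$ $$\mathbb{P}(\mathbb{T}=T_3)=\frac{\lambda_1\lambda_2(\lambda_1+\lambda_2+2\lambda_3)}{(\lambda_1+\lambda_2)(\lambda_2+\lambda_3)(\lambda_3+\lambda_1)}.$$ Moreover, the conditional distribution of $\tau_o$ given $\mathbb{T}$ is: given $\mathbb{T}=T_1$, $\mathrm{Exponential}(\lambda_1+\lambda_2)$; given $\mathbb{T}=T_2$, the law of $X+Y$ with $X\sim\mathrm{Exponential}(\lambda_1+\lambda_2)$ and $Y\sim\mathrm{Exponential}(\lambda_1+\lambda_3)$ independent; given $\mathbb{T}=T_3$, the law of $X+BY$ with $X\sim\mathrm{Exponential}(\lambda_1+\lambda_2)$,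 $Y\sim\mathrm{Exponential}(\lambda_1+\lambda_3)$ and $B$ a Bernoulli random variable with $\mathbb{P}(B=1)=(\lambda_2+\lambda_3)/(\lambda_1+\lambda_2+2\lambda_3)$, all three independent.
   Context: The three spanning trees of the triangle are $T_1$ with edges $\{s,o\},\{o,v\}$; $T_2$ with edges $\{s,v\},\{v,o\}$; $T_3$ with edges $\{s,v\},\{s,o\}$. The random tree $\mathbb{T}$ records through which edges the nodes $o$ and $v$ got infected: $\mathbb{T}=T_1$ if $v$ is infected through $o$, i.e., $\tau_{\{s,o\}}+\tau_{\{o,v\}}<\tau_{\{s,v\}}$; $\mathbb{T}=T_2$ if $o$ is infected through $v$, i.e., $\tau_{\{s,v\}}+\tau_{\{v,o\}}<\tau_{\{s,o\}}$; and $\mathbb{T}=T_3$ otherwise (both $o$ and $v$ infected directly by $s$). *)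

theory Defs
  imports "HOL-Probability.Probability"
begin

datatype spanning_tree = T1 | T2 | T3

text \<open>Arguments: a = delay of edge {s,o}, b = delay of edge {s,v}, c = delay of edge {v,o}.\<close>
definition infection_tree :: "real \<Rightarrow> real \<Rightarrow> real \<Rightarrow> spanning_tree" where
  "infection_tree a b c =
     (if a + c < b then T1 else if b + c < a then T2 else T3)"

definition infection_time_o :: "real \<Rightarrow> real \<Rightarrow> real \<Rightarrow> real" where
  "infection_time_o a b c = min a (b + c)"

definition infection_time_v :: "real \<Rightarrow> real \<Rightarrow> real \<Rightarrow> real" where
  "infection_time_v a b c = min b (a + c)"

definition exp_law :: "real \<Rightarrow> real measure" where
  "exp_law l = density lborel (exponential_density l)"

definition sum_law :: "real \<Rightarrow> real \<Rightarrow> real measure" where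
  "sum_law l m = distr (exp_law l \<Otimes>\<^sub>M exp_law m) borel (\<lambda>(x, y). x + y)"

definition mixed_law :: "real \<Rightarrow> real \<Rightarrow> real \<Rightarrow> real measure" where
  "mixed_law l m p = distr (exp_law l \<Otimes>\<^sub>M (exp_law m \<Otimes>\<^sub>M measure_pmf (bernoulli_pmf p))) borel
      (\<lambda>(x, y, b). x + (if b then 1 else 0) * y)"

end

(*
  Every event {TT = T_i, tau_o in A} is a condition on the three independent exponential
  delays a = t_so, b = t_sv, c = t_vo, and its probability is computed by integrating out one
  delay at a time.  Two properties of the law Exp(l) make each integral explicit:
  memorylessness, int_{x >= t} g x dExp(l) = exp (-l t) * int g (t + w) dExp(l) for t >= 0, and
  exponential tilting, exp (-k x) dExp(l)(x) = l / (l + k) * dExp(l + k)(x).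

  On T1 (a + c < b) integrating out b leaves tau_o = a weighted by exp (-l2 a), i.e. Exp(l1 + l2).
  On T2 (b + c < a) integrating out a leaves tau_o = b + c weighted by exp (-l1 (b + c)), i.e. the
  sum of independent Exp(l1 + l2) and Exp(l1 + l3) variables.  On T3 always tau_o = a: the part
  with a <= b again gives Exp(l1 + l2), the part with b < a gives, after substituting a = b + w,
  the same sum law; their masses are the two weights of the Bernoulli mixture.
*)
theory Submission
  imports Defs
begin

section \<open>The exponential law\<close>

lemma prob_space_exp_law: "0 < l \<Longrightarrow> prob_space (exp_law l)"
  unfolding exp_law_def by (rule prob_space_exponential_density)

lemma sets_exp_law [simp, measurable_cong]: "sets (exp_law l) = sets borel"
  by (simp add: exp_law_def)

lemma space_exp_law [simp]: "space (exp_law l) = UNIV"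
  by (simp add: exp_law_def)

lemma nn_integral_exp_law:
  "f \<in> borel_measurable borel \<Longrightarrow>
    (\<integral>\<^sup>+x. f x \<partial>exp_law l) = (\<integral>\<^sup>+x. ennreal (exponential_density l x) * f x \<partial>lborel)"
  unfolding exp_law_def by (simp add: nn_integral_density)

lemma AE_exp_law_nonneg: "AE x in exp_law l. 0 \<le> x"
  unfolding exp_law_def by (subst AE_density) (auto simp: exponential_density_def)

lemma AE_exp_law_neq: "AE x in exp_law l. x \<noteq> t"
  unfolding exp_law_def
  by (subst AE_density) (auto intro: AE_mp[OF AE_lborel_singleton[of t]])

lemma nn_integral_exp_law_cong_nonneg:
  assumes "\<And>x. 0 \<le> x \<Longrightarrow> f x = g x"
  shows "(\<integral>\<^sup>+x. f x \<partial>exp_law l) = (\<integral>\<^sup>+x. g x \<partial>exp_law l)"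
proof (rule nn_integral_cong_AE)
  show "AE x in exp_law l. f x = g x"
    using AE_exp_law_nonneg by eventually_elim (rule assms)
qed

lemma exponential_density_mult_exp:
  assumes "0 < l + k"
  shows "exponential_density l x * exp (- k * x) = l / (l + k) * exponential_density (l + k) x"
proof -
  have "exp (- x * l) * exp (- k * x) = exp (- x * (l + k))"
    by (simp add: exp_add[symmetric] algebra_simps)
  with assms show ?thesis
    by (simp add: exponential_density_def field_simps)
qed

lemma nn_integral_exp_law_tilt:
  assumes "0 < l" "0 < l + k" and [measurable]: "g \<in> borel_measurable borel"
  shows "(\<integral>\<^sup>+x. ennreal (exp (- k * x)) * g x \<partial>exp_law l)
    = ennreal (l / (l + k)) * (\<integral>\<^sup>+x. g x \<partial>exp_law (l + k))"
proof -
  have "ennreal (exponential_density l x) * ennreal (exp (- k * x))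
      = ennreal (l / (l + k)) * ennreal (exponential_density (l + k) x)" for x
    using assms(1,2) exponential_density_mult_exp[OF assms(2), of x]
    by (simp add: exponential_density_nonneg ennreal_mult[symmetric])
  then have "(\<integral>\<^sup>+x. ennreal (exp (- k * x)) * g x \<partial>exp_law l)
      = (\<integral>\<^sup>+x. ennreal (l / (l + k)) * (ennreal (exponential_density (l + k) x) * g x) \<partial>lborel)"
    by (simp add: nn_integral_exp_law mult.assoc[symmetric])
  then show ?thesis
    by (simp add: nn_integral_cmult nn_integral_exp_law)
qed

lemma nn_integral_exp_law_exp:
  assumes "0 < l" "0 < l + k"
  shows "(\<integral>\<^sup>+x. ennreal (exp (- k * x)) \<partial>exp_law l) = ennreal (l / (l + k))"
proof -
  interpret prob_space "exp_law (l + k)" using assms(2) by (rule prob_space_exp_law)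
  show ?thesis
    using nn_integral_exp_law_tilt[OF assms, of "\<lambda>_. 1"] emeasure_space_1 by simp
qed

lemma emeasure_exp_law_tilt:
  assumes "0 < l" "0 < l + k" "A \<in> sets borel"
  shows "(\<integral>\<^sup>+x. ennreal (exp (- k * x)) * indicator A x \<partial>exp_law l)
    = ennreal (l / (l + k)) * emeasure (exp_law (l + k)) A"
  using nn_integral_exp_law_tilt[OF assms(1,2), of "indicator A"] assms(3) by simp

lemma nn_integral_exp_law_shift:
  assumes "0 \<le> t" and [measurable]: "g \<in> borel_measurable borel"
  shows "(\<integral>\<^sup>+x. g x * indicator {t..} x \<partial>exp_law l)
    = ennreal (exp (- l * t)) * (\<integral>\<^sup>+w. g (t + w) \<partial>exp_law l)"
proof -
  have memoryless: "ennreal (exponential_density l (t + w)) * (g (t + w) * indicator {t..} (t + w))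
      = ennreal (exp (- l * t)) * (ennreal (exponential_density l w) * g (t + w))" for w
  proof (cases "0 \<le> w")
    case True
    have "exponential_density l (t + w) = exp (- l * t) * exponential_density l w"
      using True assms(1) by (simp add: exponential_density_def exp_add[symmetric] algebra_simps)
    then show ?thesis
      using True by (simp add: ennreal_mult'' mult_ac)
  qed (simp add: exponential_density_def)
  have "(\<integral>\<^sup>+x. g x * indicator {t..} x \<partial>exp_law l)
      = (\<integral>\<^sup>+x. ennreal (exponential_density l x) * (g x * indicator {t..} x) \<partial>lborel)"
    by (simp add: nn_integral_exp_law)
  also have "\<dots> = (\<integral>\<^sup>+w. ennreal (exponential_density l (t + w)) * (g (t + w) * indicator {t..} (t + w))
      \<partial>lborel)"
    by (subst nn_integral_real_affine[where c=1 and t=t]) simp_all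
  also have "\<dots> = ennreal (exp (- l * t)) * (\<integral>\<^sup>+w. g (t + w) \<partial>exp_law l)"
    by (simp add: memoryless nn_integral_cmult nn_integral_exp_law)
  finally show ?thesis .
qed

lemma nn_integral_exp_law_shift_strict:
  assumes "0 \<le> t" and [measurable]: "g \<in> borel_measurable borel"
  shows "(\<integral>\<^sup>+x. g x * indicator {t<..} x \<partial>exp_law l)
    = ennreal (exp (- l * t)) * (\<integral>\<^sup>+w. g (t + w) \<partial>exp_law l)"
proof -
  have "(\<integral>\<^sup>+x. g x * indicator {t<..} x \<partial>exp_law l) = (\<integral>\<^sup>+x. g x * indicator {t..} x \<partial>exp_law l)"
  proof (rule nn_integral_cong_AE)
    show "AE x in exp_law l. g x * indicator {t<..} x = g x * indicator {t..} x"
      using AE_exp_law_neq[where l=l and t=t] by eventually_elim (auto split: split_indicator)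
  qed
  also have "\<dots> = ennreal (exp (- l * t)) * (\<integral>\<^sup>+w. g (t + w) \<partial>exp_law l)"
    by (rule nn_integral_exp_law_shift[OF assms])
  finally show ?thesis .
qed

lemma emeasure_exp_law_atLeast:
  assumes "0 < l" "0 \<le> t"
  shows "emeasure (exp_law l) {t..} = ennreal (exp (- l * t))"
proof -
  interpret prob_space "exp_law l" using assms(1) by (rule prob_space_exp_law)
  have "emeasure (exp_law l) {t..} = (\<integral>\<^sup>+x. 1 * indicator {t..} x \<partial>exp_law l)"
    by simp
  also have "\<dots> = ennreal (exp (- l * t))"
    using assms(2)
    by (subst nn_integral_exp_law_shift) (simp_all add: emeasure_space_1[simplified])
  finally show ?thesis .
qed

lemma emeasure_exp_law_greaterThan:
  assumes "0 < l" "0 \<le> t"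
  shows "emeasure (exp_law l) {t<..} = ennreal (exp (- l * t))"
proof -
  interpret prob_space "exp_law l" using assms(1) by (rule prob_space_exp_law)
  have "emeasure (exp_law l) {t<..} = (\<integral>\<^sup>+x. 1 * indicator {t<..} x \<partial>exp_law l)"
    by simp
  also have "\<dots> = ennreal (exp (- l * t))"
    using assms(2)
    by (subst nn_integral_exp_law_shift_strict) (simp_all add: emeasure_space_1[simplified])
  finally show ?thesis .
qed

section \<open>Sums and mixtures of exponential laws\<close>

lemma prob_space_sum_law: "0 < l \<Longrightarrow> 0 < m \<Longrightarrow> prob_space (sum_law l m)"
  unfolding sum_law_def
  by (intro prob_space.prob_space_distr prob_space_pair prob_space_exp_law) simp_all

lemma prob_space_mixed_law: "0 < l \<Longrightarrow> 0 < m \<Longrightarrow> prob_space (mixed_law l m p)"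
  unfolding mixed_law_def
  by (intro prob_space.prob_space_distr prob_space_pair prob_space_exp_law prob_space_measure_pmf)
    simp_all

lemma space_sum_law [simp]: "space (sum_law l m) = UNIV"
  by (simp add: sum_law_def)

lemma space_mixed_law [simp]: "space (mixed_law l m p) = UNIV"
  by (simp add: mixed_law_def)

lemma emeasure_sum_law:
  assumes "0 < m" and [measurable]: "A \<in> sets borel"
  shows "emeasure (sum_law l m) A = (\<integral>\<^sup>+x. \<integral>\<^sup>+y. indicator A (x + y) \<partial>exp_law m \<partial>exp_law l)"
proof -
  interpret exp_m: prob_space "exp_law m" using assms(1) by (rule prob_space_exp_law)
  have "emeasure (sum_law l m) A = (\<integral>\<^sup>+z. indicator A z \<partial>sum_law l m)"
    by (simp add: sum_law_def)
  also have "\<dots> = (\<integral>\<^sup>+v. indicator A (fst v + snd v) \<partial>(exp_law l \<Otimes>\<^sub>M exp_law m))"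
    unfolding sum_law_def by (subst nn_integral_distr) (simp_all add: case_prod_beta)
  also have "\<dots> = (\<integral>\<^sup>+x. \<integral>\<^sup>+y. indicator A (x + y) \<partial>exp_law m \<partial>exp_law l)"
    by (subst exp_m.nn_integral_fst[symmetric]) simp_all
  finally show ?thesis .
qed

lemma emeasure_sum_law_tilt:
  assumes "0 < l" "0 < m" "0 < l + j" "0 < m + k" and [measurable]: "A \<in> sets borel"
  shows "(\<integral>\<^sup>+x. \<integral>\<^sup>+y. ennreal (exp (- j * x)) * (ennreal (exp (- k * y)) * indicator A (x + y))
      \<partial>exp_law m \<partial>exp_law l)
    = ennreal (l / (l + j)) * ennreal (m / (m + k)) * emeasure (sum_law (l + j) (m + k)) A"
proof -
  interpret exp_mk: prob_space "exp_law (m + k)" using assms(4) by (rule prob_space_exp_law)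
  have "(\<integral>\<^sup>+x. \<integral>\<^sup>+y. ennreal (exp (- j * x)) * (ennreal (exp (- k * y)) * indicator A (x + y))
      \<partial>exp_law m \<partial>exp_law l)
    = (\<integral>\<^sup>+x. ennreal (exp (- j * x)) * (\<integral>\<^sup>+y. ennreal (exp (- k * y)) * indicator A (x + y) \<partial>exp_law m)
      \<partial>exp_law l)"
    by (simp add: nn_integral_cmult)
  also have "\<dots> = (\<integral>\<^sup>+x. ennreal (exp (- j * x)) * (ennreal (m / (m + k))
      * (\<integral>\<^sup>+y. indicator A (x + y) \<partial>exp_law (m + k))) \<partial>exp_law l)"
    using assms(2,4) by (intro nn_integral_cong) (subst nn_integral_exp_law_tilt, simp_all)
  also have "\<dots> = ennreal (m / (m + k))
      * (\<integral>\<^sup>+x. ennreal (exp (- j * x)) * (\<integral>\<^sup>+y. indicator A (x + y) \<partial>exp_law (m + k)) \<partial>exp_law l)"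
    by (subst nn_integral_cmult[symmetric]) (simp_all add: mult.left_commute)
  also have "\<dots> = ennreal (m / (m + k)) * (ennreal (l / (l + j))
      * (\<integral>\<^sup>+x. \<integral>\<^sup>+y. indicator A (x + y) \<partial>exp_law (m + k) \<partial>exp_law (l + j)))"
    using assms(1,3) by (subst nn_integral_exp_law_tilt) simp_all
  finally show ?thesis
    using assms(4) by (simp add: emeasure_sum_law mult_ac)
qed

lemma emeasure_mixed_law:
  assumes "0 < m" "0 \<le> p" "p \<le> 1" and [measurable]: "A \<in> sets borel"
  shows "emeasure (mixed_law l m p) A
    = ennreal p * emeasure (sum_law l m) A + ennreal (1 - p) * emeasure (exp_law l) A"
proof -
  interpret exp_m: prob_space "exp_law m" using assms(1) by (rule prob_space_exp_law)
  let ?B = "measure_pmf (bernoulli_pmf p)"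
  interpret exp_m_B: prob_space "exp_law m \<Otimes>\<^sub>M ?B"
    by (intro prob_space_pair exp_m.prob_space_axioms prob_space_measure_pmf)
  have "emeasure (mixed_law l m p) A = (\<integral>\<^sup>+z. indicator A z \<partial>mixed_law l m p)"
    by (simp add: mixed_law_def)
  also have "\<dots> = (\<integral>\<^sup>+v. indicator A (fst v + (if snd (snd v) then 1 else 0) * fst (snd v))
      \<partial>(exp_law l \<Otimes>\<^sub>M (exp_law m \<Otimes>\<^sub>M ?B)))"
    unfolding mixed_law_def by (subst nn_integral_distr) (simp_all add: case_prod_beta)
  also have "\<dots> = (\<integral>\<^sup>+x. \<integral>\<^sup>+y. \<integral>\<^sup>+b. indicator A (x + (if b then 1 else 0) * y)
      \<partial>?B \<partial>exp_law m \<partial>exp_law l)"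
    by (subst exp_m_B.nn_integral_fst[symmetric], simp,
        subst measure_pmf.nn_integral_fst[symmetric]) (simp_all add: case_prod_beta)
  also have "\<dots> = (\<integral>\<^sup>+x. \<integral>\<^sup>+y. ennreal p * indicator A (x + y) + ennreal (1 - p) * indicator A x
      \<partial>exp_law m \<partial>exp_law l)"
    using assms(2,3) by (simp add: mult.commute)
  also have "\<dots> = ennreal p * (\<integral>\<^sup>+x. \<integral>\<^sup>+y. indicator A (x + y) \<partial>exp_law m \<partial>exp_law l)
      + ennreal (1 - p) * (\<integral>\<^sup>+x. indicator A x \<partial>exp_law l)"
    by (simp add: nn_integral_add nn_integral_cmult exp_m.emeasure_space_1[simplified])
  finally show ?thesis
    using assms(1) by (simp add: emeasure_sum_law)
qed

section \<open>Joint and conditional laws\<close>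

lemma (in prob_space) indep_vars_imp_indep_var:
  assumes indep: "indep_vars (\<lambda>_. borel) X I" and "j \<in> I" "k \<in> I" "j \<noteq> k"
  shows "indep_var lborel (X j) lborel (X k)"
proof -
  have "indep_var lborel ((\<lambda>f. f j) \<circ> (\<lambda>\<omega>. restrict (\<lambda>n. X n \<omega>) {j}))
      lborel ((\<lambda>f. f k) \<circ> (\<lambda>\<omega>. restrict (\<lambda>n. X n \<omega>) {k}))"
    using assms by (intro indep_var_compose[OF indep_var_restrict[OF indep]]) auto
  then show ?thesis
    by (simp add: comp_def)
qed

(* The two variables of indep_var must have the same type, so the independence of X i and
   (X j, X k) is read off the restrictions of X to {i} and {j, k}. *)
lemma (in prob_space) indep_vars_distr_pair:
  fixes X :: "'i \<Rightarrow> 'a \<Rightarrow> real"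
  assumes indep: "indep_vars (\<lambda>_. borel) X I" and "i \<in> I" "j \<in> I" "k \<in> I" "i \<noteq> j" "i \<noteq> k"
  shows "distr M (lborel \<Otimes>\<^sub>M (lborel \<Otimes>\<^sub>M lborel)) (\<lambda>\<omega>. (X i \<omega>, X j \<omega>, X k \<omega>))
    = distr M lborel (X i) \<Otimes>\<^sub>M distr M (lborel \<Otimes>\<^sub>M lborel) (\<lambda>\<omega>. (X j \<omega>, X k \<omega>))"
proof -
  let ?Ri = "\<lambda>\<omega>. restrict (\<lambda>n. X n \<omega>) {i}" and ?Rjk = "\<lambda>\<omega>. restrict (\<lambda>n. X n \<omega>) {j, k}"
  let ?Pi = "PiM {i} (\<lambda>_. borel :: real measure)" and ?Pjk = "PiM {j, k} (\<lambda>_. borel :: real measure)"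
  have [measurable]: "X n \<in> borel_measurable M" if "n \<in> I" for n
    using indep that by (auto simp: indep_vars_def)
  have [measurable]: "?Ri \<in> M \<rightarrow>\<^sub>M ?Pi" "?Rjk \<in> M \<rightarrow>\<^sub>M ?Pjk"
    using assms by (auto intro!: measurable_restrict)
  have [measurable]: "(\<lambda>f. f i) \<in> ?Pi \<rightarrow>\<^sub>M lborel" "(\<lambda>f. (f j, f k)) \<in> ?Pjk \<rightarrow>\<^sub>M lborel \<Otimes>\<^sub>M lborel"
    by measurable
  have "indep_var ?Pi ?Ri ?Pjk ?Rjk"
    using assms by (intro indep_var_restrict[OF indep]) auto
  then have restrictions: "distr M ?Pi ?Ri \<Otimes>\<^sub>M distr M ?Pjk ?Rjk
      = distr M (?Pi \<Otimes>\<^sub>M ?Pjk) (\<lambda>\<omega>. (?Ri \<omega>, ?Rjk \<omega>))"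
    by (simp add: indep_var_distribution_eq)
  have "distr M lborel (X i) \<Otimes>\<^sub>M distr M (lborel \<Otimes>\<^sub>M lborel) (\<lambda>\<omega>. (X j \<omega>, X k \<omega>))
      = distr (distr M ?Pi ?Ri) lborel (\<lambda>f. f i)
        \<Otimes>\<^sub>M distr (distr M ?Pjk ?Rjk) (lborel \<Otimes>\<^sub>M lborel) (\<lambda>f. (f j, f k))"
    by (simp add: distr_distr comp_def)
  also have "\<dots> = distr (distr M ?Pi ?Ri \<Otimes>\<^sub>M distr M ?Pjk ?Rjk) (lborel \<Otimes>\<^sub>M (lborel \<Otimes>\<^sub>M lborel))
      (\<lambda>(f, g). (f i, g j, g k))"
    by (intro pair_measure_distr prob_space_imp_sigma_finite prob_space.prob_space_distr prob_space_distr)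
      simp_all
  also have "\<dots> = distr M (lborel \<Otimes>\<^sub>M (lborel \<Otimes>\<^sub>M lborel)) (\<lambda>\<omega>. (X i \<omega>, X j \<omega>, X k \<omega>))"
    using assms by (simp add: restrictions distr_distr comp_def)
  finally show ?thesis ..
qed

lemma (in prob_space) indep_vars_distr_triple:
  fixes X :: "'i \<Rightarrow> 'a \<Rightarrow> real"
  assumes indep: "indep_vars (\<lambda>_. borel) X I"
    and "i \<in> I" "j \<in> I" "k \<in> I" "i \<noteq> j" "i \<noteq> k" "j \<noteq> k"
  shows "distr M (lborel \<Otimes>\<^sub>M (lborel \<Otimes>\<^sub>M lborel)) (\<lambda>\<omega>. (X i \<omega>, X j \<omega>, X k \<omega>))
    = distr M lborel (X i) \<Otimes>\<^sub>M (distr M lborel (X j) \<Otimes>\<^sub>M distr M lborel (X k))"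
  using indep_vars_imp_indep_var[OF indep, of j k] assms
  by (simp add: indep_vars_distr_pair[OF indep] indep_var_distribution_eq)

lemma conditional_law_eqI:
  fixes M :: "'a measure" and N :: "real measure" and X :: "'a \<Rightarrow> real"
  assumes N: "prob_space N" "space N = UNIV" and "0 < P"
    and law: "\<And>A. A \<in> sets borel \<Longrightarrow> emeasure M {\<omega> \<in> space M. X \<omega> \<in> A \<and> B \<omega>} = ennreal P * emeasure N A"
  shows "measure M {\<omega> \<in> space M. B \<omega>} = P \<and>
    (\<forall>A \<in> sets borel. measure M {\<omega> \<in> space M. X \<omega> \<in> A \<and> B \<omega>} / measure M {\<omega> \<in> space M. B \<omega>}
      = measure N A)"
proof -
  interpret N: prob_space N by fact
  have law': "measure M {\<omega> \<in> space M. X \<omega> \<in> A \<and> B \<omega>} = P * measure N A" if "A \<in> sets borel" for A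
    using law[OF that] \<open>0 < P\<close> by (simp add: measure_def enn2real_mult)
  have "measure M {\<omega> \<in> space M. B \<omega>} = P"
    using law'[of UNIV] N.prob_space N(2) by simp
  with law' \<open>0 < P\<close> show ?thesis
    by simp
qed

section \<open>Exponential delays on the triangle\<close>

locale exponential_triangle = prob_space M for M :: "'a measure" +
  fixes t_so t_sv t_vo :: "'a \<Rightarrow> real" and l1 l2 l3 :: real
  assumes rates_pos: "0 < l1" "0 < l2" "0 < l3"
    and distributed_so: "distributed M lborel t_so (exponential_density l1)"
    and distributed_sv: "distributed M lborel t_sv (exponential_density l2)"
    and distributed_vo: "distributed M lborel t_vo (exponential_density l3)"
    and indep_delays: "indep_vars (\<lambda>_. borel) (\<lambda>i. [t_so, t_sv, t_vo] ! i) {0, 1, 2}"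
begin

abbreviation delay :: "nat \<Rightarrow> 'a \<Rightarrow> real" where
  "delay i \<equiv> [t_so, t_sv, t_vo] ! i"

abbreviation rate :: "nat \<Rightarrow> real" where
  "rate i \<equiv> [l1, l2, l3] ! i"

abbreviation tree :: "'a \<Rightarrow> spanning_tree" where
  "tree \<omega> \<equiv> infection_tree (t_so \<omega>) (t_sv \<omega>) (t_vo \<omega>)"

abbreviation time_o :: "'a \<Rightarrow> real" where
  "time_o \<omega> \<equiv> infection_time_o (t_so \<omega>) (t_sv \<omega>) (t_vo \<omega>)"

lemma distr_delay: "i \<in> {0, 1, 2} \<Longrightarrow> distr M lborel (delay i) = exp_law (rate i)"
  using distributed_so distributed_sv distributed_vo
  by (auto simp: exp_law_def distributed_distr_eq_density)

lemma measurable_delays [measurable]: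
  "t_so \<in> borel_measurable M" "t_sv \<in> borel_measurable M" "t_vo \<in> borel_measurable M"
  using distributed_so distributed_sv distributed_vo by (auto dest: distributed_measurable)

lemma emeasure_delays:
  assumes "i \<in> {0, 1, 2}" "j \<in> {0, 1, 2}" "k \<in> {0, 1, 2}" "i \<noteq> j" "i \<noteq> k" "j \<noteq> k"
    and Q: "Measurable.pred (borel \<Otimes>\<^sub>M (borel \<Otimes>\<^sub>M borel)) (\<lambda>(x, y, z). Q x y z)"
  shows "emeasure M {\<omega> \<in> space M. Q (delay i \<omega>) (delay j \<omega>) (delay k \<omega>)}
    = (\<integral>\<^sup>+x. \<integral>\<^sup>+y. emeasure (exp_law (rate k)) {z. Q x y z} \<partial>exp_law (rate j) \<partial>exp_law (rate i))"
proof -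
  let ?S = "{(x, y, z). Q x y z}"
  have "?S = {v \<in> space (borel \<Otimes>\<^sub>M (borel \<Otimes>\<^sub>M borel)). (\<lambda>(x, y, z). Q x y z) v}"
    by (auto simp: space_pair_measure)
  then have S: "?S \<in> sets (exp_law (rate i) \<Otimes>\<^sub>M (exp_law (rate j) \<Otimes>\<^sub>M exp_law (rate k)))"
    using Q by (simp add: pred_def)
  have [measurable]: "delay n \<in> borel_measurable M" if "n \<in> {0, 1, 2}" for n
    using indep_delays that by (auto simp: indep_vars_def)
  interpret jk: prob_space "exp_law (rate j) \<Otimes>\<^sub>M exp_law (rate k)"
    using assms(2,3) rates_pos by (intro prob_space_pair prob_space_exp_law) auto
  interpret k: prob_space "exp_law (rate k)"
    using assms(3) rates_pos by (intro prob_space_exp_law) auto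
  have "emeasure M {\<omega> \<in> space M. Q (delay i \<omega>) (delay j \<omega>) (delay k \<omega>)}
      = emeasure (distr M (lborel \<Otimes>\<^sub>M (lborel \<Otimes>\<^sub>M lborel)) (\<lambda>\<omega>. (delay i \<omega>, delay j \<omega>, delay k \<omega>))) ?S"
    using S assms(1-3) by (subst emeasure_distr) (auto intro!: arg_cong[where f="emeasure M"])
  also have "\<dots> = emeasure (exp_law (rate i) \<Otimes>\<^sub>M (exp_law (rate j) \<Otimes>\<^sub>M exp_law (rate k))) ?S"
    using assms by (simp add: indep_vars_distr_triple[OF indep_delays] distr_delay)
  also have "\<dots> = (\<integral>\<^sup>+x. emeasure (exp_law (rate j) \<Otimes>\<^sub>M exp_law (rate k)) (Pair x -` ?S) \<partial>exp_law (rate i))"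
    by (rule jk.emeasure_pair_measure_alt[OF S])
  also have "\<dots> = (\<integral>\<^sup>+x. \<integral>\<^sup>+y. emeasure (exp_law (rate k)) (Pair y -` Pair x -` ?S)
      \<partial>exp_law (rate j) \<partial>exp_law (rate i))"
    by (intro nn_integral_cong k.emeasure_pair_measure_alt sets_Pair1[OF S])
  also have "\<dots> = (\<integral>\<^sup>+x. \<integral>\<^sup>+y. emeasure (exp_law (rate k)) {z. Q x y z} \<partial>exp_law (rate j) \<partial>exp_law (rate i))"
    by (simp add: vimage_def)
  finally show ?thesis .
qed

lemma emeasure_T1:
  assumes [measurable]: "A \<in> sets borel"
  shows "emeasure M {\<omega> \<in> space M. time_o \<omega> \<in> A \<and> tree \<omega> = T1}
    = ennreal (l1 * l3 / ((l1 + l2) * (l2 + l3))) * emeasure (exp_law (l1 + l2)) A"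
proof -
  have Q: "Measurable.pred (borel \<Otimes>\<^sub>M (borel \<Otimes>\<^sub>M borel)) (\<lambda>(a, c, b). min a (b + c) \<in> A \<and> a + c < b)"
    by measurable
  have "emeasure M {\<omega> \<in> space M. time_o \<omega> \<in> A \<and> tree \<omega> = T1}
      = emeasure M {\<omega> \<in> space M. (\<lambda>a c b. min a (b + c) \<in> A \<and> a + c < b)
          (delay 0 \<omega>) (delay 2 \<omega>) (delay 1 \<omega>)}"
    by (intro arg_cong[where f="emeasure M"] Collect_cong)
      (auto simp: infection_tree_def infection_time_o_def)
  also have "\<dots> = (\<integral>\<^sup>+a. \<integral>\<^sup>+c. emeasure (exp_law l2) {b. min a (b + c) \<in> A \<and> a + c < b}
      \<partial>exp_law l3 \<partial>exp_law l1)"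
    by (subst emeasure_delays[OF _ _ _ _ _ _ Q]) simp_all
  also have "\<dots> = (\<integral>\<^sup>+a. \<integral>\<^sup>+c. ennreal (exp (- l2 * a)) * indicator A a * ennreal (exp (- l2 * c))
      \<partial>exp_law l3 \<partial>exp_law l1)"
  proof (intro nn_integral_exp_law_cong_nonneg)
    fix a c :: real
    assume "0 \<le> a" "0 \<le> c"
    then have "{b. min a (b + c) \<in> A \<and> a + c < b} = (if a \<in> A then {a + c<..} else {})"
      by auto
    moreover have "exp (- l2 * (a + c)) = exp (- l2 * a) * exp (- l2 * c)"
      by (simp add: exp_add[symmetric] algebra_simps)
    ultimately show "emeasure (exp_law l2) {b. min a (b + c) \<in> A \<and> a + c < b}
        = ennreal (exp (- l2 * a)) * indicator A a * ennreal (exp (- l2 * c))"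
      using rates_pos \<open>0 \<le> a\<close> \<open>0 \<le> c\<close> by (simp add: emeasure_exp_law_greaterThan ennreal_mult)
  qed
  also have "\<dots> = (\<integral>\<^sup>+a. ennreal (exp (- l2 * a)) * indicator A a \<partial>exp_law l1) * ennreal (l3 / (l3 + l2))"
    using rates_pos nn_integral_exp_law_exp[of l3 l2] by (simp add: nn_integral_cmult nn_integral_multc)
  also have "\<dots> = ennreal (l1 / (l1 + l2)) * emeasure (exp_law (l1 + l2)) A * ennreal (l3 / (l3 + l2))"
    using rates_pos emeasure_exp_law_tilt[of l1 l2 A] by simp
  also have "\<dots> = ennreal (l1 / (l1 + l2)) * ennreal (l3 / (l3 + l2)) * emeasure (exp_law (l1 + l2)) A"
    by (simp add: mult_ac)
  also have "ennreal (l1 / (l1 + l2)) * ennreal (l3 / (l3 + l2))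
      = ennreal (l1 * l3 / ((l1 + l2) * (l2 + l3)))"
    using rates_pos by (subst ennreal_mult[symmetric]) (simp_all add: add.commute)
  finally show ?thesis .
qed

lemma emeasure_T2:
  assumes [measurable]: "A \<in> sets borel"
  shows "emeasure M {\<omega> \<in> space M. time_o \<omega> \<in> A \<and> tree \<omega> = T2}
    = ennreal (l2 * l3 / ((l1 + l2) * (l1 + l3))) * emeasure (sum_law (l1 + l2) (l1 + l3)) A"
proof -
  have Q: "Measurable.pred (borel \<Otimes>\<^sub>M (borel \<Otimes>\<^sub>M borel))
      (\<lambda>(b, c, a). min a (b + c) \<in> A \<and> \<not> a + c < b \<and> b + c < a)"
    by measurable
  have "emeasure M {\<omega> \<in> space M. time_o \<omega> \<in> A \<and> tree \<omega> = T2}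
      = emeasure M {\<omega> \<in> space M. (\<lambda>b c a. min a (b + c) \<in> A \<and> \<not> a + c < b \<and> b + c < a)
          (delay 1 \<omega>) (delay 2 \<omega>) (delay 0 \<omega>)}"
    by (intro arg_cong[where f="emeasure M"] Collect_cong)
      (auto simp: infection_tree_def infection_time_o_def)
  also have "\<dots> = (\<integral>\<^sup>+b. \<integral>\<^sup>+c. emeasure (exp_law l1) {a. min a (b + c) \<in> A \<and> \<not> a + c < b \<and> b + c < a}
      \<partial>exp_law l3 \<partial>exp_law l2)"
    by (subst emeasure_delays[OF _ _ _ _ _ _ Q]) simp_all
  also have "\<dots> = (\<integral>\<^sup>+b. \<integral>\<^sup>+c. ennreal (exp (- l1 * b)) * (ennreal (exp (- l1 * c)) * indicator A (b + c))
      \<partial>exp_law l3 \<partial>exp_law l2)"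
  proof (intro nn_integral_exp_law_cong_nonneg)
    fix b c :: real
    assume "0 \<le> b" "0 \<le> c"
    then have "{a. min a (b + c) \<in> A \<and> \<not> a + c < b \<and> b + c < a} = (if b + c \<in> A then {b + c<..} else {})"
      by auto
    moreover have "exp (- l1 * (b + c)) = exp (- l1 * b) * exp (- l1 * c)"
      by (simp add: exp_add[symmetric] algebra_simps)
    ultimately show "emeasure (exp_law l1) {a. min a (b + c) \<in> A \<and> \<not> a + c < b \<and> b + c < a}
        = ennreal (exp (- l1 * b)) * (ennreal (exp (- l1 * c)) * indicator A (b + c))"
      using rates_pos \<open>0 \<le> b\<close> \<open>0 \<le> c\<close> by (simp add: emeasure_exp_law_greaterThan ennreal_mult)
  qed
  also have "\<dots> = ennreal (l2 / (l2 + l1)) * ennreal (l3 / (l3 + l1))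
      * emeasure (sum_law (l2 + l1) (l3 + l1)) A"
    using rates_pos by (intro emeasure_sum_law_tilt) simp_all
  also have "ennreal (l2 / (l2 + l1)) * ennreal (l3 / (l3 + l1))
      = ennreal (l2 * l3 / ((l1 + l2) * (l1 + l3)))"
    using rates_pos by (subst ennreal_mult[symmetric]) (simp_all add: add.commute)
  finally show ?thesis
    by (simp add: add.commute)
qed

lemma emeasure_T3_so_le_sv:
  assumes [measurable]: "A \<in> sets borel"
  shows "emeasure M {\<omega> \<in> space M. time_o \<omega> \<in> A \<and> tree \<omega> = T3 \<and> t_so \<omega> \<le> t_sv \<omega>}
    = ennreal (l1 * l2 / ((l1 + l2) * (l2 + l3))) * emeasure (exp_law (l1 + l2)) A"
proof -
  have Q: "Measurable.pred (borel \<Otimes>\<^sub>M (borel \<Otimes>\<^sub>M borel))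
      (\<lambda>(a, b, c). a \<in> A \<and> a \<le> b \<and> b \<le> a + c)"
    by measurable
  have inner: "emeasure (exp_law l3) {c. a \<in> A \<and> a \<le> b \<and> b \<le> a + c}
      = indicator A a * (ennreal (exp (- l3 * (b - a))) * indicator {a..} b)" for a b
  proof -
    have "{c. a \<in> A \<and> a \<le> b \<and> b \<le> a + c} = (if a \<in> A \<and> a \<le> b then {b - a..} else {})"
      by auto
    then show ?thesis
      using rates_pos by (simp add: emeasure_exp_law_atLeast split: split_indicator)
  qed
  have middle: "(\<integral>\<^sup>+b. ennreal (exp (- l3 * (b - a))) * indicator {a..} b \<partial>exp_law l2)
      = ennreal (exp (- l2 * a)) * ennreal (l2 / (l2 + l3))" if "0 \<le> a" for a
    using that rates_pos nn_integral_exp_law_exp[of l2 l3]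
    by (subst nn_integral_exp_law_shift) simp_all
  have "emeasure M {\<omega> \<in> space M. time_o \<omega> \<in> A \<and> tree \<omega> = T3 \<and> t_so \<omega> \<le> t_sv \<omega>}
      = emeasure M {\<omega> \<in> space M. (\<lambda>a b c. a \<in> A \<and> a \<le> b \<and> b \<le> a + c)
          (delay 0 \<omega>) (delay 1 \<omega>) (delay 2 \<omega>)}"
    by (intro arg_cong[where f="emeasure M"] Collect_cong)
      (auto simp: infection_tree_def infection_time_o_def min_def)
  also have "\<dots> = (\<integral>\<^sup>+a. \<integral>\<^sup>+b. emeasure (exp_law l3) {c. a \<in> A \<and> a \<le> b \<and> b \<le> a + c}
      \<partial>exp_law l2 \<partial>exp_law l1)"
    by (subst emeasure_delays[OF _ _ _ _ _ _ Q]) simp_all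
  also have "\<dots> = (\<integral>\<^sup>+a. indicator A a * (\<integral>\<^sup>+b. ennreal (exp (- l3 * (b - a))) * indicator {a..} b
      \<partial>exp_law l2) \<partial>exp_law l1)"
    by (simp add: inner nn_integral_cmult)
  also have "\<dots> = (\<integral>\<^sup>+a. ennreal (exp (- l2 * a)) * indicator A a \<partial>exp_law l1) * ennreal (l2 / (l2 + l3))"
    using middle by (subst nn_integral_multc[symmetric])
      (auto intro!: nn_integral_exp_law_cong_nonneg simp: mult_ac)
  also have "\<dots> = ennreal (l1 / (l1 + l2)) * ennreal (l2 / (l2 + l3)) * emeasure (exp_law (l1 + l2)) A"
    using rates_pos emeasure_exp_law_tilt[of l1 l2 A] by (simp add: mult_ac)
  also have "ennreal (l1 / (l1 + l2)) * ennreal (l2 / (l2 + l3))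
      = ennreal (l1 * l2 / ((l1 + l2) * (l2 + l3)))"
    using rates_pos by (subst ennreal_mult[symmetric]) simp_all
  finally show ?thesis .
qed

lemma emeasure_T3_sv_less_so:
  assumes [measurable]: "A \<in> sets borel"
  shows "emeasure M {\<omega> \<in> space M. time_o \<omega> \<in> A \<and> tree \<omega> = T3 \<and> t_sv \<omega> < t_so \<omega>}
    = ennreal (l1 * l2 / ((l1 + l2) * (l1 + l3))) * emeasure (sum_law (l1 + l2) (l1 + l3)) A"
proof -
  have Q: "Measurable.pred (borel \<Otimes>\<^sub>M (borel \<Otimes>\<^sub>M borel))
      (\<lambda>(b, a, c). a \<in> A \<and> b < a \<and> a \<le> b + c)"
    by measurable
  have inner: "emeasure (exp_law l3) {c. a \<in> A \<and> b < a \<and> a \<le> b + c}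
      = (indicator A a * ennreal (exp (- l3 * (a - b)))) * indicator {b<..} a" for a b
  proof -
    have "{c. a \<in> A \<and> b < a \<and> a \<le> b + c} = (if a \<in> A \<and> b < a then {a - b..} else {})"
      by auto
    then show ?thesis
      using rates_pos by (simp add: emeasure_exp_law_atLeast split: split_indicator)
  qed
  have middle: "(\<integral>\<^sup>+a. (indicator A a * ennreal (exp (- l3 * (a - b)))) * indicator {b<..} a \<partial>exp_law l1)
      = (\<integral>\<^sup>+w. ennreal (exp (- l1 * b)) * (ennreal (exp (- l3 * w)) * indicator A (b + w)) \<partial>exp_law l1)"
    if "0 \<le> b" for b
    using that by (subst nn_integral_exp_law_shift_strict) (simp_all add: nn_integral_cmult[symmetric] mult_ac)
  have "emeasure M {\<omega> \<in> space M. time_o \<omega> \<in> A \<and> tree \<omega> = T3 \<and> t_sv \<omega> < t_so \<omega>}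
      = emeasure M {\<omega> \<in> space M. (\<lambda>b a c. a \<in> A \<and> b < a \<and> a \<le> b + c)
          (delay 1 \<omega>) (delay 0 \<omega>) (delay 2 \<omega>)}"
    by (intro arg_cong[where f="emeasure M"] Collect_cong)
      (auto simp: infection_tree_def infection_time_o_def min_def)
  also have "\<dots> = (\<integral>\<^sup>+b. \<integral>\<^sup>+a. emeasure (exp_law l3) {c. a \<in> A \<and> b < a \<and> a \<le> b + c}
      \<partial>exp_law l1 \<partial>exp_law l2)"
    by (subst emeasure_delays[OF _ _ _ _ _ _ Q]) simp_all
  also have "\<dots> = (\<integral>\<^sup>+b. \<integral>\<^sup>+a. (indicator A a * ennreal (exp (- l3 * (a - b)))) * indicator {b<..} a
      \<partial>exp_law l1 \<partial>exp_law l2)"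
    by (simp add: inner)
  also have "\<dots> = (\<integral>\<^sup>+b. \<integral>\<^sup>+w. ennreal (exp (- l1 * b)) * (ennreal (exp (- l3 * w)) * indicator A (b + w))
      \<partial>exp_law l1 \<partial>exp_law l2)"
    by (intro nn_integral_exp_law_cong_nonneg middle)
  also have "\<dots> = ennreal (l2 / (l2 + l1)) * ennreal (l1 / (l1 + l3))
      * emeasure (sum_law (l2 + l1) (l1 + l3)) A"
    using rates_pos by (intro emeasure_sum_law_tilt) simp_all
  also have "ennreal (l2 / (l2 + l1)) * ennreal (l1 / (l1 + l3))
      = ennreal (l1 * l2 / ((l1 + l2) * (l1 + l3)))"
    using rates_pos by (subst ennreal_mult[symmetric]) (simp_all add: add.commute)
  finally show ?thesis
    by (simp add: add.commute)
qed

lemma emeasure_T3: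
  assumes [measurable]: "A \<in> sets borel"
  shows "emeasure M {\<omega> \<in> space M. time_o \<omega> \<in> A \<and> tree \<omega> = T3}
    = ennreal (l1 * l2 * (l1 + l2 + 2 * l3) / ((l1 + l2) * (l2 + l3) * (l3 + l1)))
      * emeasure (mixed_law (l1 + l2) (l1 + l3) ((l2 + l3) / (l1 + l2 + 2 * l3))) A"
proof -
  define P where "P = l1 * l2 * (l1 + l2 + 2 * l3) / ((l1 + l2) * (l2 + l3) * (l3 + l1))"
  define p where "p = (l2 + l3) / (l1 + l2 + 2 * l3)"
  have pos: "0 < l1 + l2 + 2 * l3" "0 < l1 + l2" "0 < l2 + l3" "0 < l3 + l1"
    using rates_pos by simp_all
  then have "0 \<le> P" "0 \<le> p" "p \<le> 1"
    using rates_pos by (simp_all add: P_def p_def)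
  have "1 - p = (l3 + l1) / (l1 + l2 + 2 * l3)"
    using pos(1) by (simp add: p_def field_simps)
  then have "P * (1 - p) = l1 * l2 / ((l1 + l2) * (l2 + l3))"
    using pos by (simp add: P_def)
  have "P * p = l1 * l2 / ((l1 + l2) * (l1 + l3))"
    using pos by (simp add: P_def p_def add.commute)
  have "emeasure M {\<omega> \<in> space M. time_o \<omega> \<in> A \<and> tree \<omega> = T3}
      = emeasure M {\<omega> \<in> space M. time_o \<omega> \<in> A \<and> tree \<omega> = T3 \<and> t_so \<omega> \<le> t_sv \<omega>}
      + emeasure M {\<omega> \<in> space M. time_o \<omega> \<in> A \<and> tree \<omega> = T3 \<and> t_sv \<omega> < t_so \<omega>}"
    unfolding infection_tree_def infection_time_o_def
    by (subst plus_emeasure) (auto intro!: arg_cong[where f="emeasure M"])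
  also have "\<dots> = ennreal (P * (1 - p)) * emeasure (exp_law (l1 + l2)) A
      + ennreal (P * p) * emeasure (sum_law (l1 + l2) (l1 + l3)) A"
    by (simp add: emeasure_T3_so_le_sv emeasure_T3_sv_less_so \<open>P * (1 - p) = _\<close> \<open>P * p = _\<close>)
  also have "\<dots> = ennreal P * emeasure (mixed_law (l1 + l2) (l1 + l3) p) A"
    using rates_pos \<open>0 \<le> P\<close> \<open>0 \<le> p\<close> \<open>p \<le> 1\<close>
    by (simp add: emeasure_mixed_law ennreal_mult distrib_left mult_ac)
  finally show ?thesis
    by (simp add: P_def p_def)
qed

end

theorem proposition5:
  fixes M :: "'a measure" and t_so t_sv t_vo :: "'a \<Rightarrow> real"
    and l1 l2 l3 :: real
  assumes "prob_space M"
    and "l1 > 0" and "l2 > 0" and "l3 > 0"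
    and "distributed M lborel t_so (exponential_density l1)"
    and "distributed M lborel t_sv (exponential_density l2)"
    and "distributed M lborel t_vo (exponential_density l3)"
    and "prob_space.indep_vars M (\<lambda>_. borel) (\<lambda>i. [t_so, t_sv, t_vo] ! i) {0, 1, 2}"
  defines "TT \<equiv> (\<lambda>\<omega>. infection_tree (t_so \<omega>) (t_sv \<omega>) (t_vo \<omega>))"
    and "tau_o \<equiv> (\<lambda>\<omega>. infection_time_o (t_so \<omega>) (t_sv \<omega>) (t_vo \<omega>))"
  shows "measure M {\<omega> \<in> space M. TT \<omega> = T1} = l1 * l3 / ((l1 + l2) * (l2 + l3)) \<and>
         measure M {\<omega> \<in> space M. TT \<omega> = T2} = l2 * l3 / ((l1 + l2) * (l1 + l3)) \<and>
         measure M {\<omega> \<in> space M. TT \<omega> = T3} =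
           l1 * l2 * (l1 + l2 + 2 * l3) / ((l1 + l2) * (l2 + l3) * (l3 + l1)) \<and>
         (\<forall>A \<in> sets borel.
           measure M {\<omega> \<in> space M. tau_o \<omega> \<in> A \<and> TT \<omega> = T1} / measure M {\<omega> \<in> space M. TT \<omega> = T1}
           = measure (exp_law (l1 + l2)) A) \<and>
         (\<forall>A \<in> sets borel.
           measure M {\<omega> \<in> space M. tau_o \<omega> \<in> A \<and> TT \<omega> = T2} / measure M {\<omega> \<in> space M. TT \<omega> = T2}
           = measure (sum_law (l1 + l2) (l1 + l3)) A) \<and>
         (\<forall>A \<in> sets borel.
           measure M {\<omega> \<in> space M. tau_o \<omega> \<in> A \<and> TT \<omega> = T3} / measure M {\<omega> \<in> space M. TT \<omega> = T3}
           = measure (mixed_law (l1 + l2) (l1 + l3) ((l2 + l3) / (l1 + l2 + 2 * l3))) A)"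
proof -
  interpret exponential_triangle M t_so t_sv t_vo l1 l2 l3
    using assms(1-8) by (intro exponential_triangle.intro exponential_triangle_axioms.intro)
  have pos: "0 < l1 + l2" "0 < l1 + l3" "0 < l1 * l3 / ((l1 + l2) * (l2 + l3))"
    "0 < l2 * l3 / ((l1 + l2) * (l1 + l3))"
    "0 < l1 * l2 * (l1 + l2 + 2 * l3) / ((l1 + l2) * (l2 + l3) * (l3 + l1))"
    using rates_pos by (simp_all add: add_pos_pos)
  show ?thesis
    unfolding TT_def tau_o_def
    using conditional_law_eqI[OF prob_space_exp_law[OF pos(1)] space_exp_law pos(3) emeasure_T1]
      conditional_law_eqI[OF prob_space_sum_law[OF pos(1,2)] space_sum_law pos(4) emeasure_T2]
      conditional_law_eqI[OF prob_space_mixed_law[OF pos(1,2)] space_mixed_law pos(5) emeasure_T3]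
    by blast
qed

end
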